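(* Let $R$ be a generalized reductive root system in $\mathcal V$ and let $R_1\subseteq R$ with $R_1^\times:=R_1\cap R^\times\ne\emptyset$. Suppose that (a) $R_1=-R_1$; (b) $\{\delta\in R^0:\alpha'+\delta\in R_1\text{ for some }\alpha'\in R_1^\times\}\subseteq R_1$; (c) if $\alpha'\in R_1$, $\beta\in R$ and $(\alpha',\beta)\ne0$, then $\beta\in R_1$. Then $R_1$ is a generalized reductive root system in its real span (with the restricted form). Moreover, $R_1'=R_1^\times\cup(\langle R_1\rangle\cap R^0)$ is also a generalized reductive root system in the real span of $R_1$.
   Context: Let $\mathcal V$ be a nontrivial finite-dimensional real vector space with a nontrivial positive semidefinite symmetric bilinear form $(\cdot,\cdot)$. For $R\subseteq\mathcal V$ let $R^\times=\{\alpha\in R:(\alpha,\alpha)\ne0\}$, $R^0=\{\alpha\in R:(\alpha,\alpha)=0\}$, and $(\beta,\alpha^\vee)=2(\beta,\alpha)/(\alpha,\alpha)$. $R$ is a generalized reductive root system in $\mathcal V$ if: (R1) $R=-R$; (R2) $R$ spans $\mathcal V$; (R3) $R$ is discrete in $\mathcal V$; (R4) for $\alpha\in R^\times$ and $\beta\in R$ there are nonnegative integers $u,d$ such that for $n\in\mathbb Z$, $\beta+n\alpha\in R$ iff $-d\le n\le u$, and $d-u=(\beta,\alpha^\vee)$; (R5) $\alpha\in R^\times\Rightarrow2\alpha\notin R$. $\langle S\rangle$ denotes the $\mathbb Z$-span of $S$. *)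

theory Defs
  imports "HOL-Analysis.Analysis"
begin

text \<open>The real vector space V is modelled as a linear subspace of a finite-dimensional
real inner-product type 'a (euclidean_space); the form B is a real bilinear map on 'a
whose restriction to V is the symmetric positive semidefinite form of the paper.\<close>

definition nonisotropic :: "('a \<Rightarrow> 'a \<Rightarrow> real) \<Rightarrow> 'a set \<Rightarrow> 'a set" where
  "nonisotropic B R = {a \<in> R. B a a \<noteq> 0}"

definition isotropic :: "('a \<Rightarrow> 'a \<Rightarrow> real) \<Rightarrow> 'a set \<Rightarrow> 'a set" where
  "isotropic B R = {a \<in> R. B a a = 0}"

definition coroot_pair :: "('a \<Rightarrow> 'a \<Rightarrow> real) \<Rightarrow> 'a \<Rightarrow> 'a \<Rightarrow> real" where
  "coroot_pair B b a = 2 * B b a / B a a"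

definition zspan :: "'a::real_vector set \<Rightarrow> 'a set" where
  "zspan S = {\<Sum>s\<in>F. of_int (c s) *\<^sub>R s | F c. finite F \<and> F \<subseteq> S}"

definition form_space :: "('a::euclidean_space \<Rightarrow> 'a \<Rightarrow> real) \<Rightarrow> 'a set \<Rightarrow> bool" where
  "form_space B V \<longleftrightarrow> subspace V \<and> V \<noteq> {0} \<and> bilinear B
     \<and> (\<forall>x\<in>V. \<forall>y\<in>V. B x y = B y x)
     \<and> (\<forall>x\<in>V. B x x \<ge> 0)
     \<and> (\<exists>x\<in>V. \<exists>y\<in>V. B x y \<noteq> 0)"

definition gen_red_root_system ::
  "('a::euclidean_space \<Rightarrow> 'a \<Rightarrow> real) \<Rightarrow> 'a set \<Rightarrow> 'a set \<Rightarrow> bool" where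
  "gen_red_root_system B V R \<longleftrightarrow>
     form_space B V \<and> R \<subseteq> V
     \<and> (\<forall>a\<in>R. - a \<in> R)
     \<and> span R = V
     \<and> (\<forall>a\<in>R. \<exists>e>0. \<forall>b\<in>R. dist b a < e \<longrightarrow> b = a)
     \<and> (\<forall>a\<in>nonisotropic B R. \<forall>b\<in>R. \<exists>u d :: nat.
           (\<forall>n::int. b + of_int n *\<^sub>R a \<in> R \<longleftrightarrow> - int d \<le> n \<and> n \<le> int u)
           \<and> real_of_int (int d - int u) = coroot_pair B b a)
     \<and> (\<forall>a\<in>nonisotropic B R. 2 *\<^sub>R a \<notin> R)"

end

theory Submission
  imports Defs
begin

text \<open>Since \<open>R\<^sub>1 \<subseteq> R\<close>, each root string of \<open>R\<^sub>1\<close> is the corresponding root string of \<open>R\<close>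
as soon as \<open>R\<^sub>1\<close> is closed under walking along strings of \<open>R\<close>; all other axioms pass to subsets.
Walking one step from \<open>z \<in> R\<^sub>1\<close> to \<open>w = z + \<alpha>\<close> stays in \<open>R\<^sub>1\<close>: if \<open>(\<alpha>, w) \<noteq> 0\<close> or
\<open>(z, w) \<noteq> 0\<close> this is (c), and otherwise \<open>(w, w) = 0\<close> and \<open>w = \<alpha> + z\<close> gives (b) with \<open>-\<alpha>\<close>.
For \<open>R\<^sub>1'\<close> the new isotropic roots lie in the \<open>\<int>\<close>-span anyway; a string from an isotropic
\<open>\<delta>\<close> can only reach a nonisotropic root \<open>w = \<delta> + n\<alpha>\<close> with \<open>(\<alpha>, w) \<noteq> 0\<close>, since \<open>(\<alpha>, w) = 0\<close>
forces \<open>(w, w) = -n\<^sup>2(\<alpha>, \<alpha>) \<le> 0\<close>.\<close>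

lemma zspan_superset: "S \<subseteq> zspan S"
proof
  fix x assume "x \<in> S"
  then show "x \<in> zspan S"
    unfolding zspan_def by (intro CollectI exI[of _ "{x}"] exI[of _ "\<lambda>_. 1"]) simp
qed

lemma zspan_scaleR_of_int: "x \<in> zspan S \<Longrightarrow> of_int n *\<^sub>R x \<in> zspan S"
proof -
  assume "x \<in> zspan S"
  then obtain F c where F: "finite F" "F \<subseteq> S" "x = (\<Sum>s\<in>F. of_int (c s) *\<^sub>R s)"
    unfolding zspan_def by blast
  then have "of_int n *\<^sub>R x = (\<Sum>s\<in>F. of_int (n * c s) *\<^sub>R s)"
    by (simp add: scaleR_sum_right)
  with F(1,2) show ?thesis
    unfolding zspan_def by (intro CollectI exI[of _ F] exI[of _ "\<lambda>s. n * c s"]) simp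
qed

lemma zspan_minus: "x \<in> zspan S \<Longrightarrow> - x \<in> zspan S"
  using zspan_scaleR_of_int[of x S "-1"] by simp

lemma zspan_add: "x \<in> zspan S \<Longrightarrow> y \<in> zspan S \<Longrightarrow> x + y \<in> zspan S"
proof -
  assume "x \<in> zspan S" "y \<in> zspan S"
  then obtain F c G d where F: "finite F" "F \<subseteq> S" "x = (\<Sum>s\<in>F. of_int (c s) *\<^sub>R s)"
    and G: "finite G" "G \<subseteq> S" "y = (\<Sum>s\<in>G. of_int (d s) *\<^sub>R s)"
    unfolding zspan_def by blast
  define c' where "c' s = (if s \<in> F then c s else 0)" for s
  define d' where "d' s = (if s \<in> G then d s else 0)" for s
  have x: "x = (\<Sum>s\<in>F \<union> G. of_int (c' s) *\<^sub>R s)"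
    unfolding F(3) c'_def by (rule sum.mono_neutral_cong_left) (use F G in auto)
  have y: "y = (\<Sum>s\<in>F \<union> G. of_int (d' s) *\<^sub>R s)"
    unfolding G(3) d'_def by (rule sum.mono_neutral_cong_left) (use F G in auto)
  have "x + y = (\<Sum>s\<in>F \<union> G. of_int (c' s + d' s) *\<^sub>R s)"
    unfolding x y by (simp add: sum.distrib scaleR_add_left)
  with F(1,2) G(1,2) show ?thesis
    unfolding zspan_def by (intro CollectI exI[of _ "F \<union> G"] exI[of _ "\<lambda>s. c' s + d' s"]) simp
qed

lemma zspan_subset_span: "zspan S \<subseteq> span S"
  unfolding zspan_def by (fastforce intro!: span_sum span_scale intro: span_base)

lemma bilinear_isotropic_shift_orthogonal:
  assumes "bilinear B" and "B y x = B x y" and "B y y = 0" and "B x (y + c *\<^sub>R x) = 0"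
  shows "B (y + c *\<^sub>R x) (y + c *\<^sub>R x) = - (c\<^sup>2 * B x x)"
proof -
  have "B x y = - (c * B x x)"
    using assms(4) by (simp add: bilinear_radd[OF assms(1)] bilinear_rmul[OF assms(1)])
  then show ?thesis
    using assms(2,3)
    by (simp add: bilinear_ladd[OF assms(1)] bilinear_radd[OF assms(1)]
        bilinear_lmul[OF assms(1)] bilinear_rmul[OF assms(1)] power2_eq_square algebra_simps)
qed

lemma bilinear_uminus_diag: "bilinear B \<Longrightarrow> B (- x) (- x) = B x x"
  by (simp add: bilinear_lneg bilinear_rneg)

lemma form_space_span:
  assumes "form_space B V" and "S \<subseteq> V" and "a \<in> S" and "B a a \<noteq> 0"
  shows "form_space B (span S)"
proof -
  have V: "subspace V" "bilinear B" "\<forall>x\<in>V. \<forall>y\<in>V. B x y = B y x" "\<forall>x\<in>V. 0 \<le> B x x"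
    using assms(1) unfolding form_space_def by auto
  have "span S \<subseteq> V"
    using assms(2) V(1) by (rule span_minimal)
  moreover have "a \<in> span S" "a \<noteq> 0"
    using assms(3,4) bilinear_lzero[OF V(2)] by (auto intro: span_base)
  ultimately show ?thesis
    unfolding form_space_def using V assms(4) subspace_span by blast
qed

lemma gen_red_root_system_string_interval:
  assumes "gen_red_root_system B V R" and "a \<in> nonisotropic B R" and "b \<in> R"
    and "b + of_int n *\<^sub>R a \<in> R" and "min 0 n \<le> k" and "k \<le> max 0 n"
  shows "b + of_int k *\<^sub>R a \<in> R"
proof -
  obtain u d :: nat where string: "\<And>m::int. b + of_int m *\<^sub>R a \<in> R \<longleftrightarrow> - int d \<le> m \<and> m \<le> int u"
    using assms(1-3) unfolding gen_red_root_system_def by meson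
  have "- int d \<le> 0 \<and> 0 \<le> int u" "- int d \<le> n \<and> n \<le> int u"
    using string[of 0] string[of n] assms(3,4) by auto
  with assms(5,6) have "- int d \<le> k \<and> k \<le> int u"
    by (simp add: min_def max_def split: if_splits)
  then show ?thesis
    using string by blast
qed

lemma gen_red_root_system_subset:
  assumes R: "gen_red_root_system B V R" and "S \<subseteq> R" and "\<forall>x\<in>S. - x \<in> S"
    and "a \<in> S" and "B a a \<noteq> 0"
    and string_closed: "\<And>x y n. x \<in> S \<Longrightarrow> B x x \<noteq> 0 \<Longrightarrow> y \<in> S \<Longrightarrow>
      y + of_int n *\<^sub>R x \<in> R \<Longrightarrow> y + of_int n *\<^sub>R x \<in> S"
  shows "gen_red_root_system B (span S) S"
proof -
  have form: "form_space B V" and "R \<subseteq> V"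
    and discrete: "\<forall>a\<in>R. \<exists>e>0. \<forall>b\<in>R. dist b a < e \<longrightarrow> b = a"
    and strings: "\<forall>a\<in>nonisotropic B R. \<forall>b\<in>R. \<exists>u d :: nat.
      (\<forall>n::int. b + of_int n *\<^sub>R a \<in> R \<longleftrightarrow> - int d \<le> n \<and> n \<le> int u)
      \<and> real_of_int (int d - int u) = coroot_pair B b a"
    and reduced: "\<forall>a\<in>nonisotropic B R. 2 *\<^sub>R a \<notin> R"
    using R unfolding gen_red_root_system_def by blast+
  have "form_space B (span S)"
    using form_space_span[OF form] \<open>R \<subseteq> V\<close> assms(2,4,5) by blast
  moreover have "\<forall>a\<in>S. \<exists>e>0. \<forall>b\<in>S. dist b a < e \<longrightarrow> b = a"
    using discrete assms(2) by (meson subsetD)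
  moreover have "\<forall>x\<in>nonisotropic B S. 2 *\<^sub>R x \<notin> S"
    using reduced assms(2) unfolding nonisotropic_def by blast
  moreover have "\<forall>x\<in>nonisotropic B S. \<forall>y\<in>S. \<exists>u d :: nat.
      (\<forall>n::int. y + of_int n *\<^sub>R x \<in> S \<longleftrightarrow> - int d \<le> n \<and> n \<le> int u)
      \<and> real_of_int (int d - int u) = coroot_pair B y x"
  proof (intro ballI)
    fix x y assume x: "x \<in> nonisotropic B S" and y: "y \<in> S"
    have same_string: "y + of_int n *\<^sub>R x \<in> S \<longleftrightarrow> y + of_int n *\<^sub>R x \<in> R" for n
      using string_closed x y assms(2) unfolding nonisotropic_def by blast
    have "x \<in> nonisotropic B R" "y \<in> R"
      using x y assms(2) unfolding nonisotropic_def by auto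
    with strings show "\<exists>u d :: nat.
        (\<forall>n::int. y + of_int n *\<^sub>R x \<in> S \<longleftrightarrow> - int d \<le> n \<and> n \<le> int u)
        \<and> real_of_int (int d - int u) = coroot_pair B y x"
      unfolding same_string by blast
  qed
  ultimately show ?thesis
    unfolding gen_red_root_system_def using assms(3) span_superset by blast
qed

locale closed_root_subset =
  fixes B :: "'a::euclidean_space \<Rightarrow> 'a \<Rightarrow> real" and V R R1 :: "'a set"
  assumes root_system: "gen_red_root_system B V R"
    and subset: "R1 \<subseteq> R"
    and uminus_closed: "\<forall>x\<in>R1. - x \<in> R1"
    and isotropic_closed:
      "{\<delta> \<in> isotropic B R. \<exists>a'\<in>R1 \<inter> nonisotropic B R. a' + \<delta> \<in> R1} \<subseteq> R1"
    and orthogonal_closed: "\<forall>a'\<in>R1. \<forall>\<beta>\<in>R. B a' \<beta> \<noteq> 0 \<longrightarrow> \<beta> \<in> R1"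
begin

lemma form_space: "form_space B V" and roots_subset: "R \<subseteq> V"
  using root_system by (simp_all add: gen_red_root_system_def)

lemma bilinear: "bilinear B"
  using form_space by (simp add: form_space_def)

lemma uminus_root: "x \<in> R \<Longrightarrow> - x \<in> R"
  using root_system by (simp add: gen_red_root_system_def)

lemma symmetric:
  assumes "x \<in> R" and "y \<in> R"
  shows "B x y = B y x"
proof -
  have "\<forall>x\<in>V. \<forall>y\<in>V. B x y = B y x"
    using form_space by (simp add: form_space_def)
  with assms roots_subset show ?thesis
    by blast
qed

lemma nonneg:
  assumes "x \<in> R"
  shows "0 \<le> B x x"
proof -
  have "\<forall>x\<in>V. 0 \<le> B x x"
    using form_space by (simp add: form_space_def)
  with assms roots_subset show ?thesis
    by blast
qed

lemma string_step:
  assumes x: "x \<in> R1" "B x x \<noteq> 0" and z: "z \<in> R1" and "z + x \<in> R"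
  shows "z + x \<in> R1"
proof (cases "B x (z + x) = 0 \<and> B z (z + x) = 0")
  case True
  then have "B (z + x) (z + x) = 0"
    by (simp add: bilinear_ladd[OF bilinear])
  moreover have "- x \<in> R1" "B (- x) (- x) \<noteq> 0"
    using x uminus_closed bilinear_uminus_diag[OF bilinear] by auto
  moreover have "- x + (z + x) \<in> R1"
    using z by simp
  ultimately show ?thesis
    using isotropic_closed subset \<open>z + x \<in> R\<close> unfolding isotropic_def nonisotropic_def by blast
next
  case False
  then show ?thesis
    using orthogonal_closed x z \<open>z + x \<in> R\<close> by blast
qed

lemma string_closed_nat:
  assumes x: "x \<in> R1" "B x x \<noteq> 0" and y: "y \<in> R1" and "y + real m *\<^sub>R x \<in> R"
  shows "y + real m *\<^sub>R x \<in> R1"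
  using assms(4)
proof (induction m)
  case 0
  then show ?case using y by simp
next
  case (Suc m)
  have "x \<in> nonisotropic B R" "y \<in> R"
    using x y subset unfolding nonisotropic_def by auto
  with Suc.prems have "y + of_int (int m) *\<^sub>R x \<in> R"
    using gen_red_root_system_string_interval[OF root_system, of x y "int (Suc m)" "int m"] by simp
  then have "y + real m *\<^sub>R x \<in> R1"
    using Suc.IH by simp
  moreover have "y + real (Suc m) *\<^sub>R x = (y + real m *\<^sub>R x) + x"
    by (simp add: algebra_simps)
  ultimately show ?case
    using string_step[OF x] Suc.prems by metis
qed

lemma string_closed:
  assumes x: "x \<in> R1" "B x x \<noteq> 0" and y: "y \<in> R1" and "y + of_int n *\<^sub>R x \<in> R"
  shows "y + of_int n *\<^sub>R x \<in> R1"
proof (cases "0 \<le> n")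
  case True
  then have "n = int (nat n)"
    by simp
  then show ?thesis
    using string_closed_nat[OF x y, of "nat n"] assms(4) by (metis of_int_of_nat_eq)
next
  case False
  then have m: "n = - int (nat (- n))"
    by simp
  have "- x \<in> R1" "B (- x) (- x) \<noteq> 0"
    using x uminus_closed bilinear_uminus_diag[OF bilinear] by auto
  then show ?thesis
    using string_closed_nat[OF _ _ y, of "- x" "nat (- n)"] assms(4) m by simp
qed

definition R1' :: "'a set" where
  "R1' = (R1 \<inter> nonisotropic B R) \<union> (zspan R1 \<inter> isotropic B R)"

lemma R1'_subset: "R1' \<subseteq> R"
  unfolding R1'_def nonisotropic_def isotropic_def by blast

lemma subset_R1': "R1 \<subseteq> R1'"
  using subset zspan_superset unfolding R1'_def nonisotropic_def isotropic_def by blast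

lemma R1'_subset_zspan: "R1' \<subseteq> zspan R1"
  using zspan_superset unfolding R1'_def by blast

lemma span_R1': "span R1' = span R1"
  using subset_R1' R1'_subset_zspan zspan_subset_span
  by (metis span_mono span_span subset_antisym order_trans)

lemma nonisotropic_R1': "nonisotropic B R1' = R1 \<inter> nonisotropic B R"
  unfolding R1'_def nonisotropic_def isotropic_def by blast

lemma R1'_uminus_closed: "\<forall>x\<in>R1'. - x \<in> R1'"
  using uminus_closed uminus_root zspan_minus bilinear_uminus_diag[OF bilinear]
  unfolding R1'_def nonisotropic_def isotropic_def by auto

lemma string_closed_R1':
  assumes x: "x \<in> R1" "B x x \<noteq> 0" and y: "y \<in> R1'" and "y + of_int n *\<^sub>R x \<in> R"
  shows "y + of_int n *\<^sub>R x \<in> R1'"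
proof -
  define w where "w = y + of_int n *\<^sub>R x"
  have w: "w \<in> R"
    using assms(4) unfolding w_def .
  have "w \<in> R1'"
  proof (cases "B w w = 0")
    case True
    have "w \<in> zspan R1"
      unfolding w_def using y x(1) R1'_subset_zspan zspan_superset
      by (blast intro: zspan_add zspan_scaleR_of_int)
    with True w show ?thesis
      unfolding R1'_def isotropic_def by blast
  next
    case nonisotropic: False
    consider "y \<in> R1" | "B x w \<noteq> 0" | "B y y = 0" "B x w = 0"
      using y unfolding R1'_def isotropic_def by blast
    then show ?thesis
    proof cases
      case 1
      then show ?thesis
        using string_closed[OF x 1] w subset_R1' unfolding w_def by blast
    next
      case 2
      then show ?thesis
        using orthogonal_closed x(1) w subset_R1' by blast
    next
      case 3
      have "x \<in> R" "y \<in> R"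
        using x(1) y subset R1'_subset by auto
      then have "B w w = - ((of_int n)\<^sup>2 * B x x)"
        unfolding w_def using 3 symmetric
        by (intro bilinear_isotropic_shift_orthogonal[OF bilinear]) (auto simp: w_def)
      moreover have "0 \<le> (of_int n)\<^sup>2 * B x x" "0 \<le> B w w"
        using nonneg \<open>x \<in> R\<close> w by auto
      ultimately have "B w w = 0"
        by linarith
      with nonisotropic show ?thesis
        by contradiction
    qed
  qed
  then show ?thesis
    unfolding w_def .
qed

lemma gen_red_root_system_R1:
  assumes "a \<in> R1" and "B a a \<noteq> 0"
  shows "gen_red_root_system B (span R1) R1"
  by (rule gen_red_root_system_subset[OF root_system subset uminus_closed assms string_closed])

lemma gen_red_root_system_R1':
  assumes "a \<in> R1" and "B a a \<noteq> 0"
  shows "gen_red_root_system B (span R1) R1'"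
proof -
  have "gen_red_root_system B (span R1') R1'"
  proof (rule gen_red_root_system_subset[OF root_system R1'_subset R1'_uminus_closed _ assms(2)])
    show "a \<in> R1'"
      using assms(1) subset_R1' by blast
    fix x y n
    assume "x \<in> R1'" "B x x \<noteq> 0" "y \<in> R1'" "y + of_int n *\<^sub>R x \<in> R"
    moreover from \<open>x \<in> R1'\<close> \<open>B x x \<noteq> 0\<close> have "x \<in> R1"
      using nonisotropic_R1' unfolding nonisotropic_def by blast
    ultimately show "y + of_int n *\<^sub>R x \<in> R1'"
      using string_closed_R1' by blast
  qed
  then show ?thesis
    by (simp only: span_R1')
qed

end

theorem lemma2p1:
  fixes B :: "'a::euclidean_space \<Rightarrow> 'a \<Rightarrow> real"
    and V R R1 :: "'a set"
  assumes R: "gen_red_root_system B V R"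
    and sub: "R1 \<subseteq> R"
    and ne: "R1 \<inter> nonisotropic B R \<noteq> {}"
    and a: "\<forall>x\<in>R1. - x \<in> R1"
    and b: "{\<delta> \<in> isotropic B R. \<exists>a'\<in>R1 \<inter> nonisotropic B R. a' + \<delta> \<in> R1} \<subseteq> R1"
    and c: "\<forall>a'\<in>R1. \<forall>\<beta>\<in>R. B a' \<beta> \<noteq> 0 \<longrightarrow> \<beta> \<in> R1"
  shows "gen_red_root_system B (span R1) R1
       \<and> gen_red_root_system B (span R1)
           ((R1 \<inter> nonisotropic B R) \<union> (zspan R1 \<inter> isotropic B R))"
proof -
  interpret closed_root_subset B V R R1
    using R sub a b c by unfold_locales
  obtain a0 where "a0 \<in> R1" "B a0 a0 \<noteq> 0"
    using ne unfolding nonisotropic_def by blast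
  then show ?thesis
    using gen_red_root_system_R1 gen_red_root_system_R1' unfolding R1'_def by blast
qed

end
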